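(* Let $\Bbbk$ be a field of characteristic $0$ and let $J$ be a special Jordan dialgebra such that the algebra $\bar J$ has a unit. Then $\bar J$ is a special Jordan algebra.
   Context: An associative dialgebra is a vector space with bilinear $\vdash,\dashv$ satisfying $(x\dashv y)\vdash z=(x\vdash y)\vdash z$, $x\dashv(y\vdash z)=x\dashv(y\dashv z)$, $(x\vdash y)\vdash z=x\vdash(y\vdash z)$, $(x\dashv y)\dashv z=x\dashv(y\dashv z)$, $(x\vdash y)\dashv z=x\vdash(y\dashv z)$; $D^{(+)}$ is $D$ with $a\vdash_+b=\tfrac12(a\vdash b+b\dashv a)$, $a\dashv_+b=\tfrac12(a\dashv b+b\vdash a)$. A special Jordan dialgebra is a subdialgebra $J$ of some $D^{(+)}$. For such $J$ (operations $\vdash_+,\dashv_+$), $[J,J]=\mathrm{span}\{a\vdash_+b-a\dashv_+b: a,b\in J\}$ is an ideal and $\bar J=J/[J,J]$ is an ordinary (Jordan) algebra. A Jordan algebra is special if it embeds into $A^{(+)}$ (product $\tfrac12(ab+ba)$) for an associative algebra $A$. *)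

theory Defs
  imports Complex_Main
begin

(* Vector spaces over the field 'k are given as a type 'd with additive group
   structure and a scalar multiplication "sc" satisfying the library locale
   vector_space. *)

definition bilinear_op :: "('k::field \<Rightarrow> 'd::ab_group_add \<Rightarrow> 'd) \<Rightarrow> ('d \<Rightarrow> 'd \<Rightarrow> 'd) \<Rightarrow> bool" where
  "bilinear_op sc f \<longleftrightarrow>
     (\<forall>x y z. f (x + y) z = f x z + f y z) \<and>
     (\<forall>x y z. f x (y + z) = f x y + f x z) \<and>
     (\<forall>c x y. f (sc c x) y = sc c (f x y)) \<and>
     (\<forall>c x y. f x (sc c y) = sc c (f x y))"

text \<open>Associative dialgebra (D, lv, rd): lv is the product \<open>\<turnstile>\<close>, rd is \<open>\<stileturn>\<close>.\<close>
definition assoc_dialgebra :: "('k::field \<Rightarrow> 'd::ab_group_add \<Rightarrow> 'd) \<Rightarrow> ('d \<Rightarrow> 'd \<Rightarrow> 'd) \<Rightarrow> ('d \<Rightarrow> 'd \<Rightarrow> 'd) \<Rightarrow> bool" where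
  "assoc_dialgebra sc lv rd \<longleftrightarrow>
     vector_space sc \<and> bilinear_op sc lv \<and> bilinear_op sc rd \<and>
     (\<forall>x y z. lv (rd x y) z = lv (lv x y) z) \<and>
     (\<forall>x y z. rd x (lv y z) = rd x (rd y z)) \<and>
     (\<forall>x y z. lv (lv x y) z = lv x (lv y z)) \<and>
     (\<forall>x y z. rd (rd x y) z = rd x (rd y z)) \<and>
     (\<forall>x y z. rd (lv x y) z = lv x (rd y z))"

definition lv_plus :: "('k::field \<Rightarrow> 'd::ab_group_add \<Rightarrow> 'd) \<Rightarrow> ('d \<Rightarrow> 'd \<Rightarrow> 'd) \<Rightarrow> ('d \<Rightarrow> 'd \<Rightarrow> 'd) \<Rightarrow> 'd \<Rightarrow> 'd \<Rightarrow> 'd" where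
  "lv_plus sc lv rd a b = sc (1/2) (lv a b + rd b a)"

definition rd_plus :: "('k::field \<Rightarrow> 'd::ab_group_add \<Rightarrow> 'd) \<Rightarrow> ('d \<Rightarrow> 'd \<Rightarrow> 'd) \<Rightarrow> ('d \<Rightarrow> 'd \<Rightarrow> 'd) \<Rightarrow> 'd \<Rightarrow> 'd \<Rightarrow> 'd" where
  "rd_plus sc lv rd a b = sc (1/2) (rd a b + lv b a)"

definition special_jordan_subdialgebra ::
  "('k::field \<Rightarrow> 'd::ab_group_add \<Rightarrow> 'd) \<Rightarrow> ('d \<Rightarrow> 'd \<Rightarrow> 'd) \<Rightarrow> ('d \<Rightarrow> 'd \<Rightarrow> 'd) \<Rightarrow> 'd set \<Rightarrow> bool" where
  "special_jordan_subdialgebra sc lv rd J \<longleftrightarrow>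
     assoc_dialgebra sc lv rd \<and> module.subspace sc J \<and>
     (\<forall>a\<in>J. \<forall>b\<in>J. lv_plus sc lv rd a b \<in> J \<and> rd_plus sc lv rd a b \<in> J)"

definition comm_JJ :: "('k::field \<Rightarrow> 'd::ab_group_add \<Rightarrow> 'd) \<Rightarrow> ('d \<Rightarrow> 'd \<Rightarrow> 'd) \<Rightarrow> ('d \<Rightarrow> 'd \<Rightarrow> 'd) \<Rightarrow> 'd set \<Rightarrow> 'd set" where
  "comm_JJ sc lv rd J = module.span sc {lv_plus sc lv rd a b - rd_plus sc lv rd a b | a b. a \<in> J \<and> b \<in> J}"

definition coset_of :: "'d::ab_group_add set \<Rightarrow> 'd \<Rightarrow> 'd set" where
  "coset_of K a = {a + c | c. c \<in> K}"

definition rep :: "'d set \<Rightarrow> 'd" where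
  "rep X = (SOME x. x \<in> X)"

definition Jbar :: "('k::field \<Rightarrow> 'd::ab_group_add \<Rightarrow> 'd) \<Rightarrow> ('d \<Rightarrow> 'd \<Rightarrow> 'd) \<Rightarrow> ('d \<Rightarrow> 'd \<Rightarrow> 'd) \<Rightarrow> 'd set \<Rightarrow> 'd set set" where
  "Jbar sc lv rd J = coset_of (comm_JJ sc lv rd J) ` J"

definition Jbar_add :: "('k::field \<Rightarrow> 'd::ab_group_add \<Rightarrow> 'd) \<Rightarrow> ('d \<Rightarrow> 'd \<Rightarrow> 'd) \<Rightarrow> ('d \<Rightarrow> 'd \<Rightarrow> 'd) \<Rightarrow> 'd set \<Rightarrow> 'd set \<Rightarrow> 'd set \<Rightarrow> 'd set" where
  "Jbar_add sc lv rd J X Y = coset_of (comm_JJ sc lv rd J) (rep X + rep Y)"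

definition Jbar_scale :: "('k::field \<Rightarrow> 'd::ab_group_add \<Rightarrow> 'd) \<Rightarrow> ('d \<Rightarrow> 'd \<Rightarrow> 'd) \<Rightarrow> ('d \<Rightarrow> 'd \<Rightarrow> 'd) \<Rightarrow> 'd set \<Rightarrow> 'k \<Rightarrow> 'd set \<Rightarrow> 'd set" where
  "Jbar_scale sc lv rd J c X = coset_of (comm_JJ sc lv rd J) (sc c (rep X))"

text \<open>Product of \<open>\<bar>J\<close>, induced by \<turnstile>+ (equivalently by \<stileturn>+, they agree modulo [J,J]).\<close>
definition Jbar_mul :: "('k::field \<Rightarrow> 'd::ab_group_add \<Rightarrow> 'd) \<Rightarrow> ('d \<Rightarrow> 'd \<Rightarrow> 'd) \<Rightarrow> ('d \<Rightarrow> 'd \<Rightarrow> 'd) \<Rightarrow> 'd set \<Rightarrow> 'd set \<Rightarrow> 'd set \<Rightarrow> 'd set" where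
  "Jbar_mul sc lv rd J X Y = coset_of (comm_JJ sc lv rd J) (lv_plus sc lv rd (rep X) (rep Y))"

definition assoc_algebra_on ::
  "'a set \<Rightarrow> ('a \<Rightarrow> 'a \<Rightarrow> 'a) \<Rightarrow> 'a \<Rightarrow> ('a \<Rightarrow> 'a) \<Rightarrow> ('k::field \<Rightarrow> 'a \<Rightarrow> 'a) \<Rightarrow> ('a \<Rightarrow> 'a \<Rightarrow> 'a) \<Rightarrow> bool" where
  "assoc_algebra_on A add z neg sc mul \<longleftrightarrow>
     z \<in> A \<and>
     (\<forall>x\<in>A. \<forall>y\<in>A. add x y \<in> A \<and> mul x y \<in> A) \<and>
     (\<forall>x\<in>A. neg x \<in> A) \<and> (\<forall>c. \<forall>x\<in>A. sc c x \<in> A) \<and>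
     (\<forall>x\<in>A. \<forall>y\<in>A. \<forall>w\<in>A. add (add x y) w = add x (add y w)) \<and>
     (\<forall>x\<in>A. \<forall>y\<in>A. add x y = add y x) \<and>
     (\<forall>x\<in>A. add z x = x) \<and>
     (\<forall>x\<in>A. add (neg x) x = z) \<and>
     (\<forall>c. \<forall>x\<in>A. \<forall>y\<in>A. sc c (add x y) = add (sc c x) (sc c y)) \<and>
     (\<forall>c d. \<forall>x\<in>A. sc (c + d) x = add (sc c x) (sc d x)) \<and>
     (\<forall>c d. \<forall>x\<in>A. sc c (sc d x) = sc (c * d) x) \<and>
     (\<forall>x\<in>A. sc 1 x = x) \<and>
     (\<forall>x\<in>A. \<forall>y\<in>A. \<forall>w\<in>A. mul (add x y) w = add (mul x w) (mul y w)) \<and>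
     (\<forall>x\<in>A. \<forall>y\<in>A. \<forall>w\<in>A. mul x (add y w) = add (mul x y) (mul x w)) \<and>
     (\<forall>c. \<forall>x\<in>A. \<forall>y\<in>A. mul (sc c x) y = sc c (mul x y) \<and> mul x (sc c y) = sc c (mul x y)) \<and>
     (\<forall>x\<in>A. \<forall>y\<in>A. \<forall>w\<in>A. mul (mul x y) w = mul x (mul y w))"

text \<open>The carrier of A is taken inside
  the type 'a, supplied at the use site.\<close>
definition special_jordan_algebra ::
  "'a itself \<Rightarrow> 'v set \<Rightarrow> ('v \<Rightarrow> 'v \<Rightarrow> 'v) \<Rightarrow> ('k::field \<Rightarrow> 'v \<Rightarrow> 'v) \<Rightarrow> ('v \<Rightarrow> 'v \<Rightarrow> 'v) \<Rightarrow> bool" where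
  "special_jordan_algebra _ V addV scV mulV \<longleftrightarrow>
     (\<exists>(A :: 'a set) add z neg (sc :: 'k \<Rightarrow> 'a \<Rightarrow> 'a) mul \<phi>.
        assoc_algebra_on A add z neg sc mul \<and>
        \<phi> ` V \<subseteq> A \<and> inj_on \<phi> V \<and>
        (\<forall>x\<in>V. \<forall>y\<in>V. \<phi> (addV x y) = add (\<phi> x) (\<phi> y)) \<and>
        (\<forall>c. \<forall>x\<in>V. \<phi> (scV c x) = sc c (\<phi> x)) \<and>
        (\<forall>x\<in>V. \<forall>y\<in>V. \<phi> (mulV x y) = sc (1/2) (add (mul (\<phi> x) (\<phi> y)) (mul (\<phi> y) (\<phi> x)))))"

end

theory Submission
  imports Defs "HOL-Library.Function_Algebras" "HOL-Library.Product_Plus"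
begin

text \<open>
  Send \<open>x \<in> D\<close> to the pair \<open>(L\<^sub>x, R\<^sub>x)\<close> of its multiplication operators \<open>L\<^sub>x z = x \<turnstile> z\<close>,
  \<open>R\<^sub>x z = z \<stileturn> x\<close>, viewed in the associative algebra \<open>End D \<times> (End D)\<^sup>o\<^sup>p\<close>. The dialgebra
  axioms say exactly that this map is multiplicative for \<open>\<turnstile>\<close> and cannot tell \<open>x \<turnstile> y\<close> from
  \<open>x \<stileturn> y\<close>; hence it sends both \<open>a \<turnstile>\<^sub>+ b\<close> and \<open>a \<stileturn>\<^sub>+ b\<close> to the Jordan product of the images,
  kills \<open>[J,J]\<close>, and induces a homomorphism \<open>J/[J,J] \<rightarrow> (End D \<times> (End D)\<^sup>o\<^sup>p)\<^sup>(\<^sup>+\<^sup>)\<close>. It is injective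
  once \<open>J/[J,J]\<close> has a left unit \<open>e\<close>: if \<open>u \<in> J\<close> has zero image then \<open>e \<stileturn>\<^sub>+ u = 0\<close>, so
  \<open>u \<equiv> e \<turnstile>\<^sub>+ u \<equiv> e \<stileturn>\<^sub>+ u = 0\<close> modulo \<open>[J,J]\<close>.
\<close>

definition op_mult :: "('d \<Rightarrow> 'd) \<times> ('d \<Rightarrow> 'd) \<Rightarrow> ('d \<Rightarrow> 'd) \<times> ('d \<Rightarrow> 'd) \<Rightarrow> ('d \<Rightarrow> 'd) \<times> ('d \<Rightarrow> 'd)"
  where "op_mult p q = (fst p \<circ> fst q, snd q \<circ> snd p)"

definition op_scale :: "('k \<Rightarrow> 'd \<Rightarrow> 'd) \<Rightarrow> 'k \<Rightarrow> ('d \<Rightarrow> 'd) \<times> ('d \<Rightarrow> 'd) \<Rightarrow> ('d \<Rightarrow> 'd) \<times> ('d \<Rightarrow> 'd)"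
  where "op_scale sc c p = (sc c \<circ> fst p, sc c \<circ> snd p)"

definition linear_endo_pairs :: "('k::field \<Rightarrow> 'd::ab_group_add \<Rightarrow> 'd) \<Rightarrow> (('d \<Rightarrow> 'd) \<times> ('d \<Rightarrow> 'd)) set"
  where "linear_endo_pairs sc = {p. Vector_Spaces.linear sc sc (fst p) \<and> Vector_Spaces.linear sc sc (snd p)}"

lemma (in vector_space) linear_iff_additive_homogeneous:
  "Vector_Spaces.linear scale scale f \<longleftrightarrow>
     (\<forall>x y. f (x + y) = f x + f y) \<and> (\<forall>c x. f (scale c x) = scale c (f x))"
  by (simp only: Vector_Spaces.linear_iff vector_space_axioms simp_thms)

lemma (in vector_space) linear_bilinear_op_right:
  "bilinear_op scale f \<Longrightarrow> Vector_Spaces.linear scale scale (f x)"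
  by (simp add: linear_iff_additive_homogeneous bilinear_op_def)

lemma (in vector_space) linear_bilinear_op_left:
  "bilinear_op scale f \<Longrightarrow> Vector_Spaces.linear scale scale (\<lambda>x. f x y)"
  by (simp add: linear_iff_additive_homogeneous bilinear_op_def)

lemma (in vector_space) assoc_algebra_on_linear_endo_pairs:
  "assoc_algebra_on (linear_endo_pairs scale) (+) 0 uminus (op_scale scale) op_mult"
  unfolding assoc_algebra_on_def linear_endo_pairs_def op_mult_def op_scale_def
    linear_iff_additive_homogeneous
  by (intro conjI ballI allI)
    (simp_all add: fun_eq_iff prod_eq_iff scale_left_commute scale_right_distrib scale_left_distrib)

lemma (in vector_space) op_scale_zero: "op_scale scale c 0 = 0"
  by (simp add: op_scale_def comp_def zero_fun_def zero_prod_def)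

lemma rep_coset_of_diff:
  fixes K :: "'d::ab_group_add set"
  assumes "0 \<in> K"
  shows "rep (coset_of K a) - a \<in> K"
proof -
  have "a \<in> coset_of K a"
    using assms unfolding coset_of_def by force
  then have "rep (coset_of K a) \<in> coset_of K a"
    unfolding rep_def by (rule someI)
  then show ?thesis
    unfolding coset_of_def by auto
qed

lemma (in module) coset_of_eq_iff:
  assumes "subspace K"
  shows "coset_of K a = coset_of K b \<longleftrightarrow> a - b \<in> K"
proof
  assume "coset_of K a = coset_of K b"
  then have "rep (coset_of K a) - a \<in> K" "rep (coset_of K a) - b \<in> K"
    using rep_coset_of_diff subspace_0[OF assms] by metis+
  then show "a - b \<in> K"
    using subspace_diff[OF assms] by fastforce
next
  assume ab: "a - b \<in> K"
  have "a + c = b + ((a - b) + c)" "b + c = a + (c - (a - b))" for c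
    by simp_all
  then show "coset_of K a = coset_of K b"
    unfolding coset_of_def using ab subspace_add[OF assms] subspace_diff[OF assms] by blast
qed

locale dialgebra =
  fixes sc :: "'k::field \<Rightarrow> 'd::ab_group_add \<Rightarrow> 'd" and lv rd :: "'d \<Rightarrow> 'd \<Rightarrow> 'd"
  assumes assoc_dialgebra: "assoc_dialgebra sc lv rd"
begin

sublocale vector_space sc
  using assoc_dialgebra by (simp add: assoc_dialgebra_def)

lemma linear_lv_right: "Vector_Spaces.linear sc sc (lv x)"
  and linear_rd_left: "Vector_Spaces.linear sc sc (\<lambda>z. rd z x)"
  using assoc_dialgebra
  by (auto simp: assoc_dialgebra_def intro: linear_bilinear_op_right linear_bilinear_op_left)

lemma lv_add_left: "lv (x + y) z = lv x z + lv y z"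
  and lv_scale_left: "lv (sc c x) z = sc c (lv x z)"
  and rd_add_right: "rd z (x + y) = rd z x + rd z y"
  and rd_scale_right: "rd z (sc c x) = sc c (rd z x)"
  using assoc_dialgebra by (simp_all add: assoc_dialgebra_def bilinear_op_def)

lemma lv_rd_left: "lv (rd x y) z = lv (lv x y) z"
  and rd_lv_right: "rd x (lv y z) = rd x (rd y z)"
  and lv_assoc: "lv (lv x y) z = lv x (lv y z)"
  and rd_assoc: "rd (rd x y) z = rd x (rd y z)"
  using assoc_dialgebra by (simp_all add: assoc_dialgebra_def)

definition mult_ops :: "'d \<Rightarrow> ('d \<Rightarrow> 'd) \<times> ('d \<Rightarrow> 'd)"
  where "mult_ops x = (lv x, \<lambda>z. rd z x)"

lemma mult_ops_in_linear_endo_pairs: "mult_ops x \<in> linear_endo_pairs sc"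
  by (simp add: mult_ops_def linear_endo_pairs_def linear_lv_right linear_rd_left)

lemma mult_ops_add: "mult_ops (x + y) = mult_ops x + mult_ops y"
  by (simp add: mult_ops_def fun_eq_iff lv_add_left rd_add_right)

lemma mult_ops_scale: "mult_ops (sc c x) = op_scale sc c (mult_ops x)"
  by (simp add: mult_ops_def op_scale_def fun_eq_iff lv_scale_left rd_scale_right)

lemma mult_ops_diff: "mult_ops (x - y) = mult_ops x - mult_ops y"
  using mult_ops_add[of "x - y" y] by (simp add: algebra_simps)

lemma mult_ops_zero: "mult_ops 0 = 0"
  using mult_ops_add[of 0 0] by simp

lemma mult_ops_rd: "mult_ops (rd x y) = mult_ops (lv x y)"
  by (simp add: mult_ops_def fun_eq_iff lv_rd_left rd_lv_right)

lemma op_mult_mult_ops: "op_mult (mult_ops x) (mult_ops y) = mult_ops (lv x y)"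
  by (simp add: mult_ops_def op_mult_def fun_eq_iff lv_assoc rd_assoc rd_lv_right)

abbreviation jordan_op :: "('d \<Rightarrow> 'd) \<times> ('d \<Rightarrow> 'd) \<Rightarrow> ('d \<Rightarrow> 'd) \<times> ('d \<Rightarrow> 'd) \<Rightarrow> ('d \<Rightarrow> 'd) \<times> ('d \<Rightarrow> 'd)"
  where "jordan_op p q \<equiv> op_scale sc (1/2) (op_mult p q + op_mult q p)"

lemma mult_ops_lv_plus: "mult_ops (lv_plus sc lv rd x y) = jordan_op (mult_ops x) (mult_ops y)"
  by (simp add: lv_plus_def mult_ops_scale mult_ops_add mult_ops_rd op_mult_mult_ops)

lemma mult_ops_rd_plus: "mult_ops (rd_plus sc lv rd x y) = jordan_op (mult_ops x) (mult_ops y)"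
  by (simp add: rd_plus_def mult_ops_scale mult_ops_add mult_ops_rd op_mult_mult_ops add.commute)

lemma mult_ops_eq_0D: "mult_ops u = 0 \<Longrightarrow> lv u z = 0 \<and> rd z u = 0"
  by (simp add: mult_ops_def prod_eq_iff fun_eq_iff)

end

locale special_jordan_dialgebra = dialgebra sc lv rd
  for sc :: "'k::field \<Rightarrow> 'd::ab_group_add \<Rightarrow> 'd" and lv rd +
  fixes J :: "'d set"
  assumes subspace_J: "subspace J"
    and lv_plus_closed: "\<lbrakk>a \<in> J; b \<in> J\<rbrakk> \<Longrightarrow> lv_plus sc lv rd a b \<in> J"
    and rd_plus_closed: "\<lbrakk>a \<in> J; b \<in> J\<rbrakk> \<Longrightarrow> rd_plus sc lv rd a b \<in> J"
begin

abbreviation "JJ \<equiv> comm_JJ sc lv rd J"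

lemma subspace_comm_JJ: "subspace JJ"
  by (simp add: comm_JJ_def)

lemma comm_JJ_generator: "\<lbrakk>a \<in> J; b \<in> J\<rbrakk> \<Longrightarrow> lv_plus sc lv rd a b - rd_plus sc lv rd a b \<in> JJ"
  unfolding comm_JJ_def by (rule span_base) blast

lemma comm_JJ_subset: "JJ \<subseteq> J"
  unfolding comm_JJ_def
  by (rule span_minimal[OF _ subspace_J])
    (auto intro: subspace_diff[OF subspace_J] lv_plus_closed rd_plus_closed)

lemma mult_ops_comm_JJ:
  assumes "k \<in> JJ"
  shows "mult_ops k = 0"
proof -
  have "subspace {k. mult_ops k = 0}"
    unfolding subspace_def
    by (simp add: mult_ops_zero mult_ops_add mult_ops_scale op_scale_zero)
  moreover have "{lv_plus sc lv rd a b - rd_plus sc lv rd a b | a b. a \<in> J \<and> b \<in> J} \<subseteq> {k. mult_ops k = 0}"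
    by (auto simp: mult_ops_diff mult_ops_lv_plus mult_ops_rd_plus)
  ultimately show ?thesis
    using span_minimal assms unfolding comm_JJ_def by blast
qed

lemma mult_ops_rep: "mult_ops (rep (coset_of JJ a)) = mult_ops a"
  using mult_ops_comm_JJ[OF rep_coset_of_diff[OF subspace_0[OF subspace_comm_JJ]]]
  by (simp add: mult_ops_diff)

lemma rep_in_J: "a \<in> J \<Longrightarrow> rep (coset_of JJ a) \<in> J"
  using rep_coset_of_diff[OF subspace_0[OF subspace_comm_JJ], of a] comm_JJ_subset
    subspace_add[OF subspace_J, of a "rep (coset_of JJ a) - a"]
  by auto

lemma Jbar_cases:
  assumes "X \<in> Jbar sc lv rd J"
  obtains x where "x \<in> J" "X = coset_of JJ x"
  using assms unfolding Jbar_def by blast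

lemma in_comm_JJ_if_mult_ops_eq_0:
  assumes unit: "\<exists>E\<in>Jbar sc lv rd J. \<forall>X\<in>Jbar sc lv rd J. Jbar_mul sc lv rd J E X = X"
    and "u \<in> J" "mult_ops u = 0"
  shows "u \<in> JJ"
proof -
  obtain E where E: "E \<in> Jbar sc lv rd J" and "Jbar_mul sc lv rd J E (coset_of JJ u) = coset_of JJ u"
    using unit \<open>u \<in> J\<close> unfolding Jbar_def by blast
  define e w where "e = rep E" and "w = rep (coset_of JJ u)"
  have "lv_plus sc lv rd e w - u \<in> JJ"
    using \<open>Jbar_mul sc lv rd J E (coset_of JJ u) = coset_of JJ u\<close>
    by (simp add: e_def w_def Jbar_mul_def coset_of_eq_iff[OF subspace_comm_JJ])
  have "e \<in> J"
    using E rep_in_J unfolding e_def by (auto elim: Jbar_cases)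
  have "w \<in> J" "mult_ops w = 0"
    using rep_in_J mult_ops_rep \<open>u \<in> J\<close> \<open>mult_ops u = 0\<close> unfolding w_def by auto
  then have "rd_plus sc lv rd e w = 0"
    by (simp add: rd_plus_def mult_ops_eq_0D)
  with comm_JJ_generator[OF \<open>e \<in> J\<close> \<open>w \<in> J\<close>] have "lv_plus sc lv rd e w \<in> JJ"
    by simp
  with \<open>lv_plus sc lv rd e w - u \<in> JJ\<close> show "u \<in> JJ"
    using subspace_diff[OF subspace_comm_JJ, of "lv_plus sc lv rd e w" "lv_plus sc lv rd e w - u"]
    by simp
qed

lemma inj_on_mult_ops_rep:
  assumes unit: "\<exists>E\<in>Jbar sc lv rd J. \<forall>X\<in>Jbar sc lv rd J. Jbar_mul sc lv rd J E X = X"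
  shows "inj_on (\<lambda>X. mult_ops (rep X)) (Jbar sc lv rd J)"
proof (rule inj_onI)
  fix X Y
  assume "X \<in> Jbar sc lv rd J" "Y \<in> Jbar sc lv rd J" and eq: "mult_ops (rep X) = mult_ops (rep Y)"
  then obtain x y where x: "x \<in> J" "X = coset_of JJ x" and y: "y \<in> J" "Y = coset_of JJ y"
    by (metis Jbar_cases)
  have "mult_ops (x - y) = 0"
    using eq by (simp add: x y mult_ops_rep mult_ops_diff)
  with unit have "x - y \<in> JJ"
    by (rule in_comm_JJ_if_mult_ops_eq_0[OF _ subspace_diff[OF subspace_J x(1) y(1)]])
  then show "X = Y"
    by (simp add: x y coset_of_eq_iff[OF subspace_comm_JJ])
qed

theorem special_jordan_algebra_Jbar:
  assumes "\<exists>E\<in>Jbar sc lv rd J. \<forall>X\<in>Jbar sc lv rd J. Jbar_mul sc lv rd J E X = X"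
  shows "special_jordan_algebra TYPE(('d \<Rightarrow> 'd) \<times> ('d \<Rightarrow> 'd)) (Jbar sc lv rd J)
           (Jbar_add sc lv rd J) (Jbar_scale sc lv rd J) (Jbar_mul sc lv rd J)"
  unfolding special_jordan_algebra_def
proof (intro exI conjI)
  show "assoc_algebra_on (linear_endo_pairs sc) (+) 0 uminus (op_scale sc) op_mult"
    by (rule assoc_algebra_on_linear_endo_pairs)
  show "(\<lambda>X. mult_ops (rep X)) ` Jbar sc lv rd J \<subseteq> linear_endo_pairs sc"
    using mult_ops_in_linear_endo_pairs by blast
  show "inj_on (\<lambda>X. mult_ops (rep X)) (Jbar sc lv rd J)"
    using assms by (rule inj_on_mult_ops_rep)
  show "\<forall>X\<in>Jbar sc lv rd J. \<forall>Y\<in>Jbar sc lv rd J.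
          mult_ops (rep (Jbar_add sc lv rd J X Y)) = mult_ops (rep X) + mult_ops (rep Y)"
    by (simp add: Jbar_add_def mult_ops_rep mult_ops_add)
  show "\<forall>c. \<forall>X\<in>Jbar sc lv rd J.
          mult_ops (rep (Jbar_scale sc lv rd J c X)) = op_scale sc c (mult_ops (rep X))"
    by (simp add: Jbar_scale_def mult_ops_rep mult_ops_scale)
  show "\<forall>X\<in>Jbar sc lv rd J. \<forall>Y\<in>Jbar sc lv rd J.
          mult_ops (rep (Jbar_mul sc lv rd J X Y)) = jordan_op (mult_ops (rep X)) (mult_ops (rep Y))"
    by (simp add: Jbar_mul_def mult_ops_rep mult_ops_lv_plus)
qed

end

lemma special_jordan_dialgebraI:
  "special_jordan_subdialgebra sc lv rd J \<Longrightarrow> special_jordan_dialgebra sc lv rd J"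
  by (simp add: special_jordan_subdialgebra_def special_jordan_dialgebra_def
      special_jordan_dialgebra_axioms_def dialgebra_def)

lemma assoc_algebra_on_image:
  assumes "assoc_algebra_on A add z neg sc mul" "inj e"
  shows "assoc_algebra_on (e ` A) (\<lambda>x y. e (add (inv e x) (inv e y))) (e z)
     (\<lambda>x. e (neg (inv e x))) (\<lambda>c x. e (sc c (inv e x))) (\<lambda>x y. e (mul (inv e x) (inv e y)))"
proof -
  have ball_image: "(\<forall>x\<in>f ` B. P x) \<longleftrightarrow> (\<forall>y\<in>B. P (f y))" for f B P
    by auto
  show ?thesis
    unfolding assoc_algebra_on_def
    by (simp only: ball_image inv_f_f[OF assms(2)] inj_image_mem_iff[OF assms(2)] inj_eq[OF assms(2)])
      (rule assms(1)[unfolded assoc_algebra_on_def])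
qed

lemma special_jordan_algebra_inj_type:
  assumes "special_jordan_algebra TYPE('b) V addV scV mulV" and inj: "inj (e :: 'b \<Rightarrow> 'a)"
  shows "special_jordan_algebra TYPE('a) V addV scV mulV"
proof -
  obtain A add z neg sc mul \<phi> where alg: "assoc_algebra_on (A :: 'b set) add z neg sc mul"
    and "\<phi> ` V \<subseteq> A" "inj_on \<phi> V"
    and "\<forall>x\<in>V. \<forall>y\<in>V. \<phi> (addV x y) = add (\<phi> x) (\<phi> y)"
    and "\<forall>c. \<forall>x\<in>V. \<phi> (scV c x) = sc c (\<phi> x)"
    and "\<forall>x\<in>V. \<forall>y\<in>V. \<phi> (mulV x y) = sc (1/2) (add (mul (\<phi> x) (\<phi> y)) (mul (\<phi> y) (\<phi> x)))"
    using assms(1) unfolding special_jordan_algebra_def by (elim exE conjE) (rule that)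
  then show ?thesis
    unfolding special_jordan_algebra_def
  proof (intro exI conjI)
    show "assoc_algebra_on (e ` A) (\<lambda>x y. e (add (inv e x) (inv e y))) (e z)
        (\<lambda>x. e (neg (inv e x))) (\<lambda>c x. e (sc c (inv e x))) (\<lambda>x y. e (mul (inv e x) (inv e y)))"
      using alg inj by (rule assoc_algebra_on_image)
    show "(e \<circ> \<phi>) ` V \<subseteq> e ` A"
      using \<open>\<phi> ` V \<subseteq> A\<close> by (auto simp: image_comp[symmetric])
    show "inj_on (e \<circ> \<phi>) V"
      using \<open>inj_on \<phi> V\<close> inj by (simp add: comp_inj_on inj_on_subset)
  qed (simp_all add: inv_f_f[OF inj])
qed

text \<open>The main theorem fixes the ambient type \<open>('d set list \<Rightarrow> 'k) set\<close> of the associative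
  algebra; a pair of operators is coded by the indicator functions of its graph triples.\<close>

definition graph_code :: "('d \<Rightarrow> 'd) \<times> ('d \<Rightarrow> 'd) \<Rightarrow> ('d set list \<Rightarrow> 'k::zero_neq_one) set"
  where "graph_code p = range (\<lambda>x l. of_bool (l = [{x}, {fst p x}, {snd p x}]))"

lemma inj_graph_code: "inj (graph_code :: _ \<Rightarrow> ('d set list \<Rightarrow> 'k::zero_neq_one) set)"
proof (rule injI)
  fix p q :: "('d \<Rightarrow> 'd) \<times> ('d \<Rightarrow> 'd)"
  assume eq: "(graph_code p :: ('d set list \<Rightarrow> 'k) set) = graph_code q"
  have "fst p x = fst q x \<and> snd p x = snd q x" for x
  proof -
    have "(\<lambda>l. of_bool (l = [{x}, {fst p x}, {snd p x}]) :: 'k) \<in> graph_code q"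
      using eq unfolding graph_code_def by blast
    then obtain y where "(\<lambda>l. of_bool (l = [{x}, {fst p x}, {snd p x}]) :: 'k)
        = (\<lambda>l. of_bool (l = [{y}, {fst q y}, {snd q y}]))"
      unfolding graph_code_def by blast
    from fun_cong[OF this, of "[{x}, {fst p x}, {snd p x}]"]
    have "[{x}, {fst p x}, {snd p x}] = [{y}, {fst q y}, {snd q y}]"
      by (simp only: of_bool_eq_iff simp_thms)
    then show ?thesis
      by auto
  qed
  then show "p = q"
    by (simp add: prod_eq_iff fun_eq_iff)
qed

theorem mainTheorem18:
  fixes sc :: "'k::field_char_0 \<Rightarrow> 'd::ab_group_add \<Rightarrow> 'd"
    and lv rd :: "'d \<Rightarrow> 'd \<Rightarrow> 'd"
    and J :: "'d set"
  assumes "special_jordan_subdialgebra sc lv rd J"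
    and "\<exists>E\<in>Jbar sc lv rd J. \<forall>X\<in>Jbar sc lv rd J.
           Jbar_mul sc lv rd J E X = X \<and> Jbar_mul sc lv rd J X E = X"
  shows "special_jordan_algebra TYPE(('d set list \<Rightarrow> 'k) set) (Jbar sc lv rd J)
           (Jbar_add sc lv rd J) (Jbar_scale sc lv rd J) (Jbar_mul sc lv rd J)"
proof -
  have "\<exists>E\<in>Jbar sc lv rd J. \<forall>X\<in>Jbar sc lv rd J. Jbar_mul sc lv rd J E X = X"
    using assms(2) by meson
  with assms(1) have "special_jordan_algebra TYPE(('d \<Rightarrow> 'd) \<times> ('d \<Rightarrow> 'd)) (Jbar sc lv rd J)
      (Jbar_add sc lv rd J) (Jbar_scale sc lv rd J) (Jbar_mul sc lv rd J)"
    by (rule special_jordan_dialgebra.special_jordan_algebra_Jbar[OF special_jordan_dialgebraI])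
  then show ?thesis
    by (rule special_jordan_algebra_inj_type[OF _ inj_graph_code])
qed

end
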